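(* Let $p$ be a prime and $1\le N\le p$. Let $P$ be a box with inputs and outputs in $\mathbb{Z}_p$, and let $\mu_j$ be as defined below. Fix $c\in\mathbb{Z}_p$. In the protocol basicRAC$(p,N,c,P)$ described below, for every $\vec x\in\mathbb{Z}_p^N$ and every $y\in\{0,\dots,N-1\}$, Bob's output $b$ satisfies $$\Pr[b=x_y]=\chi_p(\vec\mu,N-1,c):=\sum_{\substack{(j_1,\dots,j_{N-1})\in\mathbb{Z}_p^{N-1}\\ j_1+\dots+j_{N-1}=-c}}\ \prod_{k=1}^{N-1}\mu_{j_k}=\frac1p\sum_{k=0}^{p-1}\omega_p^{ck}\Big(\sum_{j=0}^{p-1}\mu_j\omega_p^{jk}\Big)^{N-1},$$ where $\omega_p=e^{2\pi i/p}$. For $N=1$ the empty sum condition means $\chi_p=1$ if $c=0$ and $0$ otherwise.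
   Context: Let $p$ be a prime. All arithmetic on elements of $\mathbb{Z}_p$ is modulo $p$. A box is a conditional probability distribution $P(a,b\mid x,y)$ with $a,b,x,y\in\mathbb{Z}_p$. It is shared by Alice, who supplies $x$ and receives $a$, and Bob, who supplies $y$ and receives $b$. Different copies act independently. Define $\mu_j=\frac1{p^2}\sum_{x,y=0}^{p-1}\sum_{k=0}^{p-1}P(a=k,b=k-xy+j\mid x,y)$ for $j\in\mathbb{Z}_p$, and $\vec\mu=(\mu_0,\dots,\mu_{p-1})$. For $N\le p$, define $F_0,\dots,F_{N-1}:\mathbb{Z}_p^N\to\mathbb{Z}_p$ by $$\sum_{i=0}^{N-1}\Big[\prod_{0\le j\ne i\le N-1}(i-j)^{-1}(y-j)\Big]x_i=\sum_{k=0}^{N-1}y^kF_k(\vec x)$$ as polynomials in $y$. With this definition, $x_y=\sum_k y^kF_k(\vec x)$ for $y\in\{0,\dots,N-1\}$. Protocol basicRAC$(p,N,c,P)$. Alice holds $\vec x\in\mathbb{Z}_p^N$ and Bob holds $y\in\{0,\dots,N-1\}$. They use $N-1$ copies of $P$. 1. Each copy $k=1,\dots,N-1$ is depolarized as follows. With fresh independent uniform shared $\alpha,\beta,\gamma\in\mathbb{Z}_p$, the parties feed inputs $u+\alpha$ (Alice) and $v+\beta$ (Bob) to the copy of $P$ when their intended inputs are $u,v$. On receiving $a',b'$, they use $a'-\beta u-\alpha\beta+\gamma$ and $b'+\alpha v+\gamma$ as their outputs. 2. For copy $k$, Alice's intended input is $F_k(\vec x)$ and Bob's is $y^k$. The resulting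 outputs are $a_k$ and $b_k$. 3. Alice sends $q=\sum_{k=1}^{N-1}a_k+F_0(\vec x)$ to Bob. 4. Bob outputs $b=q-\sum_{k=1}^{N-1}b_k-c$. *)

theory Defs
  imports Complex_Main "HOL-Computational_Algebra.Computational_Algebra"
begin

text \<open>Elements of Z_p are represented by integers in {0..<p}; all arithmetic is reduced mod p.\<close>

definition zp :: "int \<Rightarrow> int set" where
  "zp p = {0..<p}"

text \<open>Inverse in Z_p (for p prime and a not divisible by p), via Fermat: a^(p-2) mod p.\<close>
definition zinv :: "int \<Rightarrow> int \<Rightarrow> int" where
  "zinv p a = (a ^ nat (p - 2)) mod p"

definition lagrange_poly :: "int \<Rightarrow> nat \<Rightarrow> nat \<Rightarrow> int poly" where
  "lagrange_poly p N i =
     (\<Prod>j\<in>{0..<N} - {i}. smult (zinv p (int i - int j)) [:- int j, 1:])"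

definition Fcoef :: "int \<Rightarrow> nat \<Rightarrow> (nat \<Rightarrow> int) \<Rightarrow> nat \<Rightarrow> int" where
  "Fcoef p N x k = coeff (\<Sum>i<N. smult (x i) (lagrange_poly p N i)) k mod p"

text \<open>A box: P a b x y = P(a,b | x,y), a conditional probability distribution on Z_p.\<close>
definition is_box :: "int \<Rightarrow> (int \<Rightarrow> int \<Rightarrow> int \<Rightarrow> int \<Rightarrow> real) \<Rightarrow> bool" where
  "is_box p P \<longleftrightarrow>
     (\<forall>a\<in>zp p. \<forall>b\<in>zp p. \<forall>x\<in>zp p. \<forall>y\<in>zp p. 0 \<le> P a b x y) \<and>
     (\<forall>x\<in>zp p. \<forall>y\<in>zp p. (\<Sum>a\<in>zp p. \<Sum>b\<in>zp p. P a b x y) = 1)"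

definition mu :: "int \<Rightarrow> (int \<Rightarrow> int \<Rightarrow> int \<Rightarrow> int \<Rightarrow> real) \<Rightarrow> int \<Rightarrow> real" where
  "mu p P j = 1 / (real_of_int p)^2 *
     (\<Sum>x\<in>zp p. \<Sum>y\<in>zp p. \<Sum>k\<in>zp p. P k ((k - x * y + j) mod p) x y)"

text \<open>Bob's output in basicRAC(p,N,c,P), as a function of the shared randomness
  al, be, ga (indexed by copies k = 1..N-1) and the raw box outputs a', b'.\<close>
definition bob_output ::
  "int \<Rightarrow> nat \<Rightarrow> int \<Rightarrow> (nat \<Rightarrow> int) \<Rightarrow> nat \<Rightarrow>
   (nat \<Rightarrow> int) \<Rightarrow> (nat \<Rightarrow> int) \<Rightarrow> (nat \<Rightarrow> int) \<Rightarrow> (nat \<Rightarrow> int) \<Rightarrow> (nat \<Rightarrow> int) \<Rightarrow> int" where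
  "bob_output p N c x y al be ga a' b' =
    (let u = (\<lambda>k. Fcoef p N x k);
         v = (\<lambda>k. (int y) ^ k mod p);
         a = (\<lambda>k. (a' k - be k * u k - al k * be k + ga k) mod p);
         b = (\<lambda>k. (b' k + al k * v k + ga k) mod p);
         q = ((\<Sum>k\<in>{1..<N}. a k) + Fcoef p N x 0) mod p
     in (q - (\<Sum>k\<in>{1..<N}. b k) - c) mod p)"

text \<open>Probability that Bob's output equals x_y: average over uniform independent
  al_k, be_k, ga_k and over the independent box outputs of the N-1 copies.\<close>
definition success_prob ::
  "int \<Rightarrow> nat \<Rightarrow> int \<Rightarrow> (int \<Rightarrow> int \<Rightarrow> int \<Rightarrow> int \<Rightarrow> real) \<Rightarrow> (nat \<Rightarrow> int) \<Rightarrow> nat \<Rightarrow> real" where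
  "success_prob p N c P x y =
    (let R = PiE {1..<N} (\<lambda>_. zp p);
         u = (\<lambda>k. Fcoef p N x k);
         v = (\<lambda>k. (int y) ^ k mod p)
     in (\<Sum>al\<in>R. \<Sum>be\<in>R. \<Sum>ga\<in>R. \<Sum>a'\<in>R. \<Sum>b'\<in>R.
          (1 / (real_of_int p) ^ 3) ^ (N - 1) *
          (\<Prod>k\<in>{1..<N}. P (a' k) (b' k) ((u k + al k) mod p) ((v k + be k) mod p)) *
          (if bob_output p N c x y al be ga a' b' = x y then 1 else 0)))"

definition chi :: "int \<Rightarrow> (int \<Rightarrow> real) \<Rightarrow> nat \<Rightarrow> int \<Rightarrow> real" where
  "chi p m n c =
     (\<Sum>j\<in>{j\<in>PiE {1..n} (\<lambda>_. zp p). (\<Sum>k\<in>{1..n}. j k) mod p = (- c) mod p}.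
        \<Prod>k\<in>{1..n}. m (j k))"

definition omega :: "int \<Rightarrow> complex" where
  "omega p = exp (2 * pi * \<i> / of_int p)"

end

theory Submission
  imports Defs "HOL-Number_Theory.Residues" "HOL-Analysis.Complex_Transcendental"
begin

(* The theorem has two independent halves.

   (1) Correctness of basicRAC.  For each copy k the depolarization hides the
   inputs and outputs of the box, and what survives is the "error"
   j_k = b'_k - a'_k + X_k Y_k of that copy.  Telescoping the protocol shows that
   Bob's output equals x_y - (j_1 + ... + j_{N-1}) - c (mod p), because Lagrange
   interpolation mod p gives F_0 + sum_k F_k y^k = x_y.  So Bob succeeds iff the
   error vector lies in S = {J. sum J = -c}.  Writing this indicator as a sum over
   J in S of products of coordinatewise deltas, the average over the independent
   copies factorizes; every factor, averaged over the uniform shifts, is mu_{J_k}.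

   (2) The Fourier formula for chi, for an arbitrary weight function: expand the
   (N-1)-th power as a sum over Z_p^(N-1) and use the orthogonality of the p-th
   roots of unity, sum_k omega^(k M) = p [p | M]. *)

section \<open>Orthogonality of p-th roots of unity and the Fourier form of chi\<close>

text \<open>Powers of omega p in the form used by the library's roots-of-unity lemmas.\<close>

lemma omega_power:
  assumes "p > 0"
  shows "omega p ^ m = exp (2 * of_real pi * \<i> * of_nat m / of_nat (nat p))"
proof -
  have "omega p ^ m = exp (of_nat m * (2 * pi * \<i> / of_int p))"
    unfolding omega_def by (simp only: exp_of_nat_mult)
  also have "\<dots> = exp (2 * of_real pi * \<i> * of_nat m / of_nat (nat p))"
    using assms by (simp add: field_simps)
  finally show ?thesis .
qed

lemma omega_power_eq_1_iff:
  assumes "p > 0"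
  shows "omega p ^ m = 1 \<longleftrightarrow> p dvd int m"
proof -
  have "omega p ^ m = 1 \<longleftrightarrow> nat p dvd m"
    unfolding omega_power[OF assms] using assms by (intro complex_root_unity_eq_1) simp
  also have "\<dots> \<longleftrightarrow> p dvd int m"
    using assms by (metis int_dvd_int_iff int_nat_eq less_imp_le)
  finally show ?thesis .
qed

lemma sum_omega_powers:
  assumes "p > 0"
  shows "(\<Sum>k\<in>zp p. omega p ^ (nat k * M)) = (if p dvd int M then of_int p else 0)"
proof -
  let ?z = "omega p ^ M"
  have "bij_betw nat (zp p) {..<nat p}"
    unfolding zp_def bij_betw_def inj_on_def
    by (auto simp: image_iff intro!: bexI[where x = "int _"])
  then have "(\<Sum>k\<in>zp p. omega p ^ (nat k * M)) = (\<Sum>k<nat p. ?z ^ k)"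
    by (simp add: sum.reindex_bij_betw[symmetric] power_mult mult.commute)
  also have "\<dots> = (if p dvd int M then of_int p else 0)"
  proof (cases "p dvd int M")
    case True
    then have "?z = 1" using omega_power_eq_1_iff[OF assms] by simp
    with True assms show ?thesis by simp
  next
    case False
    then have "?z \<noteq> 1" using omega_power_eq_1_iff[OF assms] by simp
    moreover have "?z ^ nat p = 1"
      using omega_power_eq_1_iff[OF assms, of "M * nat p"] assms
      by (simp add: power_mult[symmetric])
    ultimately show ?thesis using False by (simp add: sum_gp_strict)
  qed
  finally show ?thesis .
qed

lemma fourier_power_expansion:
  fixes m :: "int \<Rightarrow> real"
  assumes k: "k \<in> zp p"
  shows "(\<Sum>j\<in>zp p. complex_of_real (m j) * omega p ^ nat (j * k)) ^ n
       = (\<Sum>J\<in>PiE {1..n} (\<lambda>_. zp p).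
            complex_of_real (\<Prod>i\<in>{1..n}. m (J i)) * omega p ^ (nat k * (\<Sum>i\<in>{1..n}. nat (J i))))"
proof -
  have "(\<Sum>j\<in>zp p. complex_of_real (m j) * omega p ^ nat (j * k)) ^ n
      = (\<Prod>i\<in>{1..n}. \<Sum>j\<in>zp p. complex_of_real (m j) * omega p ^ nat (j * k))"
    by simp
  also have "\<dots> = (\<Sum>J\<in>PiE {1..n} (\<lambda>_. zp p).
                    \<Prod>i\<in>{1..n}. complex_of_real (m (J i)) * omega p ^ nat (J i * k))"
    by (rule prod_sum_PiE) (auto simp: zp_def)
  also have "\<dots> = (\<Sum>J\<in>PiE {1..n} (\<lambda>_. zp p).
            complex_of_real (\<Prod>i\<in>{1..n}. m (J i)) * omega p ^ (nat k * (\<Sum>i\<in>{1..n}. nat (J i))))"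
  proof (rule sum.cong[OF refl])
    fix J assume J: "J \<in> PiE {1..n} (\<lambda>_. zp p)"
    have "\<And>i. i \<in> {1..n} \<Longrightarrow> nat (J i * k) = nat k * nat (J i)"
      using J k by (auto simp: zp_def PiE_iff nat_mult_distrib)
    then show "(\<Prod>i\<in>{1..n}. complex_of_real (m (J i)) * omega p ^ nat (J i * k))
        = complex_of_real (\<Prod>i\<in>{1..n}. m (J i)) * omega p ^ (nat k * (\<Sum>i\<in>{1..n}. nat (J i)))"
      by (simp add: prod.distrib power_sum sum_distrib_left)
  qed
  finally show ?thesis .
qed

lemma chi_fourier:
  fixes m :: "int \<Rightarrow> real"
  assumes p: "p > 0" and c: "c \<in> zp p"
  shows "complex_of_real (chi p m n c) =
           1 / of_int p * (\<Sum>k\<in>zp p. omega p ^ nat (c * k) *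
              (\<Sum>j\<in>zp p. complex_of_real (m j) * omega p ^ nat (j * k)) ^ n)"
proof -
  let ?R = "PiE {1..n} (\<lambda>_. zp p)"
  let ?w = "\<lambda>J. \<Prod>i\<in>{1..n}. m (J i)"
  define E where "E J = nat c + (\<Sum>i\<in>{1..n}. nat (J i))" for J :: "nat \<Rightarrow> int"
  have c0: "c \<ge> 0" using c by (simp add: zp_def)
  have E_dvd: "p dvd int (E J) \<longleftrightarrow> (\<Sum>i\<in>{1..n}. J i) mod p = (- c) mod p" if J: "J \<in> ?R" for J
  proof -
    have "int (E J) = c + (\<Sum>i\<in>{1..n}. J i)"
      unfolding E_def using J c0 by (auto simp: zp_def PiE_iff intro!: sum.cong)
    then show ?thesis by (simp add: mod_eq_dvd_iff add.commute)
  qed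
  have "(\<Sum>k\<in>zp p. omega p ^ nat (c * k) *
              (\<Sum>j\<in>zp p. complex_of_real (m j) * omega p ^ nat (j * k)) ^ n)
      = (\<Sum>k\<in>zp p. \<Sum>J\<in>?R. complex_of_real (?w J) * omega p ^ (nat k * E J))"
  proof (rule sum.cong[OF refl])
    fix k assume k: "k \<in> zp p"
    then have "nat (c * k) = nat k * nat c" using c0 by (simp add: zp_def nat_mult_distrib)
    then show "omega p ^ nat (c * k) * (\<Sum>j\<in>zp p. complex_of_real (m j) * omega p ^ nat (j * k)) ^ n
        = (\<Sum>J\<in>?R. complex_of_real (?w J) * omega p ^ (nat k * E J))"
      by (simp add: fourier_power_expansion[OF k] sum_distrib_left E_def power_add algebra_simps)
  qed
  also have "\<dots> = (\<Sum>J\<in>?R. complex_of_real (?w J) * (\<Sum>k\<in>zp p. omega p ^ (nat k * E J)))"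
    by (simp add: sum.swap[of _ "zp p"] sum_distrib_left)
  also have "\<dots> = (\<Sum>J\<in>?R. of_int p * complex_of_real (if p dvd int (E J) then ?w J else 0))"
    by (intro sum.cong refl) (simp add: sum_omega_powers[OF p])
  also have "\<dots> = of_int p * complex_of_real (\<Sum>J\<in>?R. if p dvd int (E J) then ?w J else 0)"
    by (simp add: sum_distrib_left)
  also have "(\<Sum>J\<in>?R. if p dvd int (E J) then ?w J else 0) = chi p m n c"
    unfolding chi_def
    by (simp add: E_dvd sum.inter_filter[symmetric] finite_PiE zp_def cong: sum.cong)
  finally show ?thesis using p by simp
qed

section \<open>Lagrange interpolation modulo a prime\<close>

lemma fermat_int:
  fixes p a :: int
  assumes "prime p" "\<not> p dvd a"
  shows "[a ^ nat (p - 1) = 1] (mod p)"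
proof -
  have p1: "p > 1" using assms(1) prime_gt_1_int by blast
  interpret residues p "residue_ring p" by unfold_locales (use p1 in auto)
  have "coprime a p" using prime_imp_coprime[OF assms] by (simp add: coprime_commute)
  then have "[a ^ totient (nat p) = 1] (mod p)" by (rule euler_theorem)
  moreover have "totient (nat p) = nat (p - 1)"
  proof -
    have "prime (nat p)" using assms(1) p1 prime_int_nat_transfer[of "nat p"] by simp
    then show ?thesis by (simp add: totient_prime nat_diff_distrib)
  qed
  ultimately show ?thesis by simp
qed

lemma zinv_mult_cong:
  fixes p a :: int
  assumes "prime p" "\<not> p dvd a"
  shows "[zinv p a * a = 1] (mod p)"
proof -
  have "[zinv p a * a = a ^ nat (p - 2) * a] (mod p)"
    unfolding zinv_def by (simp add: Cong.cong_def mod_mult_left_eq)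
  also have "a ^ nat (p - 2) * a = a ^ nat (p - 1)"
  proof -
    have "nat (p - 1) = Suc (nat (p - 2))" using prime_gt_1_int[OF assms(1)] by simp
    then show ?thesis by (simp add: power_Suc2)
  qed
  also have "[\<dots> = 1] (mod p)" by (rule fermat_int[OF assms])
  finally show ?thesis .
qed

text \<open>Each Lagrange basis polynomial is a product of N-1 linear factors.\<close>

lemma degree_lagrange_poly:
  assumes "i < N"
  shows "degree (lagrange_poly p N i) \<le> N - 1"
proof -
  have "degree (lagrange_poly p N i)
      \<le> (\<Sum>j\<in>{0..<N} - {i}. degree (Polynomial.smult (zinv p (int i - int j)) [:- int j, 1:]))"
    unfolding lagrange_poly_def by (rule order_trans[OF degree_prod_sum_le]) (simp_all add: o_def)
  also have "\<dots> \<le> (\<Sum>j\<in>{0..<N} - {i}. 1)"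
    by (rule sum_mono) (rule order_trans[OF degree_smult_le], simp)
  also have "\<dots> = N - 1" using assms by simp
  finally show ?thesis .
qed

text \<open>Lagrange basis values at the nodes: L_i(y) is 0 for i \<noteq> y and 1 (mod p) for i = y.
  The second fact needs the nodes 0, ..., N-1 to be distinct modulo p, i.e. N \<le> p.\<close>

lemma lagrange_poly_other_node:
  assumes "i < N" "y < N" "i \<noteq> y"
  shows "poly (lagrange_poly p N i) (int y) = 0"
  unfolding lagrange_poly_def poly_prod
  by (rule prod_zero) (use assms in \<open>auto intro!: bexI[where x = y]\<close>)

lemma lagrange_poly_own_node:
  assumes pr: "prime p" and Np: "int N \<le> p" and yN: "y < N"
  shows "[poly (lagrange_poly p N y) (int y) = 1] (mod p)"
proof -
  have "[poly (lagrange_poly p N y) (int y) = (\<Prod>j\<in>{0..<N} - {y}. 1)] (mod p)"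
    unfolding lagrange_poly_def poly_prod
  proof (rule cong_prod)
    fix j assume j: "j \<in> {0..<N} - {y}"
    have "\<not> p dvd (int y - int j)"
    proof
      assume "p dvd (int y - int j)"
      moreover have "int y - int j \<noteq> 0" using j by auto
      ultimately have "\<bar>p\<bar> \<le> \<bar>int y - int j\<bar>" by (rule dvd_imp_le_int[rotated])
      moreover have "\<bar>int y - int j\<bar> < int N" using j yN by auto
      ultimately show False using Np prime_gt_1_int[OF pr] by simp
    qed
    moreover have "poly (Polynomial.smult (zinv p (int y - int j)) [:- int j, 1:]) (int y)
        = zinv p (int y - int j) * (int y - int j)"
      by (simp add: algebra_simps)
    ultimately show "[poly (Polynomial.smult (zinv p (int y - int j)) [:- int j, 1:]) (int y) = 1] (mod p)"
      using zinv_mult_cong[OF pr] by simp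
  qed
  then show ?thesis by simp
qed

lemma Fcoef_interpolates:
  assumes pr: "prime p" and N1: "1 \<le> N" and Np: "int N \<le> p" and yN: "y < N"
  shows "[Fcoef p N x 0 + (\<Sum>k\<in>{1..<N}. Fcoef p N x k * ((int y) ^ k mod p)) = x y] (mod p)"
proof -
  define Q where "Q = (\<Sum>i<N. Polynomial.smult (x i) (lagrange_poly p N i))"
  have "degree Q \<le> N - 1"
    unfolding Q_def
    by (intro degree_sum_le order_trans[OF degree_smult_le] degree_lagrange_poly) auto
  then have "poly Q (int y) = (\<Sum>k<N. Polynomial.coeff Q k * int y ^ k)"
    unfolding poly_altdef using N1
    by (intro sum.mono_neutral_left) (auto simp: coeff_eq_0)
  also have "\<dots> = Polynomial.coeff Q 0 + (\<Sum>k\<in>{1..<N}. Polynomial.coeff Q k * int y ^ k)"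
  proof -
    have "{..<N} = insert 0 {1..<N}" using N1 by auto
    then show ?thesis by simp
  qed
  finally have Q_coeffs: "poly Q (int y) = Polynomial.coeff Q 0 + (\<Sum>k\<in>{1..<N}. Polynomial.coeff Q k * int y ^ k)" .
  have "poly Q (int y) = (\<Sum>i<N. if i = y then x y * poly (lagrange_poly p N y) (int y) else 0)"
    unfolding Q_def poly_sum
    by (intro sum.cong refl) (simp add: lagrange_poly_other_node yN)
  also have "\<dots> = x y * poly (lagrange_poly p N y) (int y)"
    using yN by simp
  also have "[\<dots> = x y] (mod p)"
    using cong_scalar_left[OF lagrange_poly_own_node[OF pr Np yN], of "x y"] by simp
  finally have "[poly Q (int y) = x y] (mod p)" .
  moreover have "[Fcoef p N x 0 + (\<Sum>k\<in>{1..<N}. Fcoef p N x k * ((int y) ^ k mod p))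
      = Polynomial.coeff Q 0 + (\<Sum>k\<in>{1..<N}. Polynomial.coeff Q k * int y ^ k)] (mod p)"
    unfolding Fcoef_def Q_def[symmetric]
    by (intro cong_add cong_sum cong_mult) (auto simp: Cong.cong_def)
  ultimately show ?thesis using Q_coeffs cong_trans by metis
qed

section \<open>The protocol\<close>

text \<open>Telescoping the protocol: Bob's output is x_y - sum_k j_k - c modulo p, where
  j_k = b'_k - a'_k + X_k Y_k is the error of copy k and X_k, Y_k are the inputs actually
  fed to it.  The shared randomness alpha, beta, gamma cancels.\<close>

lemma bob_output_cong:
  fixes p :: int
  assumes interp: "[Fcoef p N x 0 + (\<Sum>k\<in>{1..<N}. Fcoef p N x k * ((int y)^k mod p)) = x y] (mod p)"
  shows "[bob_output p N c x y al be ga a' b' = x y -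
     (\<Sum>k\<in>{1..<N}. (b' k - a' k + ((Fcoef p N x k + al k) mod p) * (((int y)^k mod p + be k) mod p)) mod p)
     - c] (mod p)"
proof -
  define I where "I = {1..<N}"
  define u where "u k = Fcoef p N x k" for k
  define v where "v k = (int y)^k mod p" for k
  define A where "A k = a' k - be k * u k - al k * be k + ga k" for k
  define B where "B k = b' k + al k * v k + ga k" for k
  define err where "err k = b' k - a' k + ((u k + al k) mod p) * ((v k + be k) mod p)" for k
  have interp': "[u 0 + (\<Sum>k\<in>I. u k * v k) = x y] (mod p)"
    using interp unfolding u_def v_def I_def .
  have bob: "bob_output p N c x y al be ga a' b'
     = (((\<Sum>k\<in>I. A k mod p) + u 0) mod p - (\<Sum>k\<in>I. B k mod p) - c) mod p"
    unfolding bob_output_def Let_def I_def u_def v_def A_def B_def ..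
  have telescope: "[(\<Sum>k\<in>I. A k) - (\<Sum>k\<in>I. B k) = (\<Sum>k\<in>I. u k * v k) - (\<Sum>k\<in>I. err k mod p)] (mod p)"
  proof -
    have "[A k - B k = u k * v k - err k mod p] (mod p)" for k
    proof -
      have "A k - B k = u k * v k - (b' k - a' k + (u k + al k) * (v k + be k))"
        by (simp add: A_def B_def algebra_simps)
      also have "[u k * v k - (b' k - a' k + (u k + al k) * (v k + be k)) = u k * v k - err k mod p] (mod p)"
        unfolding err_def by (intro cong_diff cong_add cong_mult cong_refl cong_mod_rightI)
      finally show ?thesis .
    qed
    then show ?thesis by (simp only: sum_subtractf[symmetric] cong_sum)
  qed
  have "[(\<Sum>k\<in>I. A k mod p) = (\<Sum>k\<in>I. A k)] (mod p)" "[(\<Sum>k\<in>I. B k mod p) = (\<Sum>k\<in>I. B k)] (mod p)"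
    by (intro cong_sum cong_mod_leftI cong_refl)+
  then have "[bob_output p N c x y al be ga a' b' = u 0 + ((\<Sum>k\<in>I. A k) - (\<Sum>k\<in>I. B k)) - c] (mod p)"
    unfolding bob by (intro cong_mod_leftI) (simp add: cong_diff cong_add cong_refl algebra_simps)
  also have "[u 0 + ((\<Sum>k\<in>I. A k) - (\<Sum>k\<in>I. B k)) - c
      = u 0 + ((\<Sum>k\<in>I. u k * v k) - (\<Sum>k\<in>I. err k mod p)) - c] (mod p)"
    by (intro cong_diff cong_add cong_refl telescope)
  also have "u 0 + ((\<Sum>k\<in>I. u k * v k) - (\<Sum>k\<in>I. err k mod p)) - c
      = (u 0 + (\<Sum>k\<in>I. u k * v k)) - (\<Sum>k\<in>I. err k mod p) - c"
    by simp
  also have "[\<dots> = x y - (\<Sum>k\<in>I. err k mod p) - c] (mod p)"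
    by (intro cong_diff cong_refl interp')
  finally show ?thesis unfolding err_def I_def u_def v_def .
qed

lemma bob_output_correct_iff:
  fixes p :: int
  assumes p1: "p > 1"
    and interp: "[Fcoef p N x 0 + (\<Sum>k\<in>{1..<N}. Fcoef p N x k * ((int y)^k mod p)) = x y] (mod p)"
    and xy: "x y \<in> zp p"
  shows "bob_output p N c x y al be ga a' b' = x y \<longleftrightarrow>
     (\<Sum>k\<in>{1..<N}. (b' k - a' k + ((Fcoef p N x k + al k) mod p) * (((int y)^k mod p + be k) mod p)) mod p) mod p
        = (- c) mod p"
    (is "_ \<longleftrightarrow> ?errors mod p = _")
proof -
  have "bob_output p N c x y al be ga a' b' \<in> zp p"
    unfolding bob_output_def Let_def zp_def using p1 by simp
  then have "bob_output p N c x y al be ga a' b' = x y \<longleftrightarrow> [bob_output p N c x y al be ga a' b' = x y] (mod p)"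
    using xy by (auto simp: Cong.cong_def zp_def)
  also have "\<dots> \<longleftrightarrow> [x y - ?errors - c = x y] (mod p)"
    using bob_output_cong[OF interp] by (meson cong_sym cong_trans)
  also have "\<dots> \<longleftrightarrow> ?errors mod p = (- c) mod p"
  proof -
    have "x y - ?errors - c - x y = - (?errors - (- c))" by simp
    then show ?thesis by (simp only: cong_iff_dvd_diff mod_eq_dvd_iff dvd_minus_iff)
  qed
  finally show ?thesis .
qed

lemma sum_shift_mod:
  fixes p u :: int and g :: "int \<Rightarrow> 'c::comm_monoid_add"
  assumes "p > 0"
  shows "(\<Sum>\<alpha>\<in>zp p. g ((u + \<alpha>) mod p)) = (\<Sum>X\<in>zp p. g X)"
proof -
  have "bij_betw (\<lambda>\<alpha>. (u + \<alpha>) mod p) (zp p) (zp p)"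
  proof (rule bij_betw_imageI)
    show "inj_on (\<lambda>\<alpha>. (u + \<alpha>) mod p) (zp p)"
      by (rule inj_onI) (auto simp: zp_def mod_eq_dvd_iff dest: mod_eq_dvd_iff[THEN iffD2])
    have "X \<in> (\<lambda>\<alpha>. (u + \<alpha>) mod p) ` zp p" if "X \<in> zp p" for X
    proof
      show "X = (u + (X - u) mod p) mod p"
        using that by (simp add: mod_add_right_eq zp_def)
      show "(X - u) mod p \<in> zp p" using assms by (simp add: zp_def)
    qed
    then show "(\<lambda>\<alpha>. (u + \<alpha>) mod p) ` zp p = zp p"
      using assms by (auto simp: zp_def)
  qed
  then show ?thesis by (rule sum.reindex_bij_betw)
qed

lemma depolarized_copy_error:
  fixes p u v J :: int and P :: "int \<Rightarrow> int \<Rightarrow> int \<Rightarrow> int \<Rightarrow> real"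
  assumes p0: "p > 0" and J: "J \<in> zp p"
  shows "(\<Sum>\<alpha>\<in>zp p. \<Sum>\<beta>\<in>zp p. \<Sum>s\<in>zp p. \<Sum>t\<in>zp p.
            P s t ((u + \<alpha>) mod p) ((v + \<beta>) mod p) *
            (if (t - s + ((u + \<alpha>) mod p) * ((v + \<beta>) mod p)) mod p = J then 1 else 0))
       = (real_of_int p)^2 * mu p P J"
proof -
  define g where "g X Y = (\<Sum>s\<in>zp p. \<Sum>t\<in>zp p. P s t X Y * (if (t - s + X * Y) mod p = J then 1 else 0))"
    for X Y
  have error_J: "(t - s + X * Y) mod p = J \<longleftrightarrow> t = (s - X * Y + J) mod p" if t: "t \<in> zp p" for s t X Y
  proof -
    have "(t - s + X * Y) mod p = J \<longleftrightarrow> (t - s + X * Y) mod p = J mod p"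
      using J by (simp add: zp_def)
    also have "\<dots> \<longleftrightarrow> t mod p = (s - X * Y + J) mod p"
      by (simp add: mod_eq_dvd_iff algebra_simps)
    also have "\<dots> \<longleftrightarrow> t = (s - X * Y + J) mod p"
      using t by (simp add: zp_def)
    finally show ?thesis .
  qed
  have "(\<Sum>\<alpha>\<in>zp p. \<Sum>\<beta>\<in>zp p. g ((u + \<alpha>) mod p) ((v + \<beta>) mod p)) = (\<Sum>X\<in>zp p. \<Sum>Y\<in>zp p. g X Y)"
    using sum_shift_mod[OF p0, of "\<lambda>X. \<Sum>Y\<in>zp p. g X Y" u] sum_shift_mod[OF p0, of "g _" v]
    by simp
  also have "\<dots> = (\<Sum>X\<in>zp p. \<Sum>Y\<in>zp p. \<Sum>s\<in>zp p. P s ((s - X * Y + J) mod p) X Y)"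
    unfolding g_def
  proof (intro sum.cong refl)
    fix X Y s
    have "(\<Sum>t\<in>zp p. P s t X Y * (if (t - s + X * Y) mod p = J then 1 else 0))
        = (\<Sum>t\<in>zp p. if t = (s - X * Y + J) mod p then P s t X Y else 0)"
      by (intro sum.cong refl) (simp add: error_J)
    also have "\<dots> = P s ((s - X * Y + J) mod p) X Y"
      using p0 by (simp add: zp_def)
    finally show "(\<Sum>t\<in>zp p. P s t X Y * (if (t - s + X * Y) mod p = J then 1 else 0))
        = P s ((s - X * Y + J) mod p) X Y" .
  qed
  also have "\<dots> = (real_of_int p)^2 * mu p P J"
    unfolding mu_def using p0 by simp
  finally show ?thesis unfolding g_def .
qed

text \<open>An indicator of membership in a finite set S of vectors over I is a sum over S of
  products of coordinatewise deltas; this is what lets the average factorize over copies.\<close>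

lemma indicator_as_sum_of_deltas:
  fixes f :: "'k \<Rightarrow> 'a"
  assumes "finite I" "finite S" "S \<subseteq> extensional I"
  shows "(if restrict f I \<in> S then 1 else 0)
       = (\<Sum>J\<in>S. \<Prod>k\<in>I. if f k = J k then 1 else (0 :: 'c::comm_semiring_1))"
proof -
  have "(\<Prod>k\<in>I. if f k = J k then 1 else (0 :: 'c)) = (if J = restrict f I then 1 else 0)"
    if "J \<in> S" for J
  proof (cases "J = restrict f I")
    case False
    moreover have "J \<in> extensional I" using \<open>J \<in> S\<close> assms(3) by blast
    ultimately obtain k where k: "k \<in> I" "f k \<noteq> J k"
      using extensionalityI[of J I "restrict f I"] by fastforce
    have "(\<Prod>k\<in>I. if f k = J k then 1 else (0 :: 'c)) = 0"
      using k assms(1) by (intro prod_zero) auto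
    then show ?thesis using False by simp
  qed simp
  then show ?thesis using assms(2) by (simp add: sum.delta cong: sum.cong)
qed

lemma independent_copies_factorize:
  fixes w :: "'k \<Rightarrow> 'a \<Rightarrow> 'a \<Rightarrow> 'a \<Rightarrow> 'a \<Rightarrow> 'c::comm_semiring_1"
    and e :: "'k \<Rightarrow> 'a \<Rightarrow> 'a \<Rightarrow> 'a \<Rightarrow> 'a \<Rightarrow> 'b"
    and I :: "'k set" and Z :: "'a set"
  defines "R \<equiv> PiE I (\<lambda>_. Z)"
  assumes "finite I" "finite Z" "finite S" "S \<subseteq> extensional I"
  shows "(\<Sum>al\<in>R. \<Sum>be\<in>R. \<Sum>a\<in>R. \<Sum>b\<in>R.
            (\<Prod>k\<in>I. w k (al k) (be k) (a k) (b k)) *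
            (if (\<lambda>k\<in>I. e k (al k) (be k) (a k) (b k)) \<in> S then 1 else 0))
       = (\<Sum>J\<in>S. \<Prod>k\<in>I. \<Sum>\<alpha>\<in>Z. \<Sum>\<beta>\<in>Z. \<Sum>s\<in>Z. \<Sum>t\<in>Z.
            w k \<alpha> \<beta> s t * (if e k \<alpha> \<beta> s t = J k then 1 else 0))"
proof -
  have prod_PiE: "(\<Prod>k\<in>I. \<Sum>\<alpha>\<in>Z. F k \<alpha>) = (\<Sum>al\<in>R. \<Prod>k\<in>I. F k (al k))" for F :: "'k \<Rightarrow> 'a \<Rightarrow> 'c"
    unfolding R_def using assms by (intro prod_sum_PiE) auto
  have "(\<Sum>al\<in>R. \<Sum>be\<in>R. \<Sum>a\<in>R. \<Sum>b\<in>R.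
            (\<Prod>k\<in>I. w k (al k) (be k) (a k) (b k)) *
            (if (\<lambda>k\<in>I. e k (al k) (be k) (a k) (b k)) \<in> S then 1 else 0))
      = (\<Sum>al\<in>R. \<Sum>be\<in>R. \<Sum>a\<in>R. \<Sum>b\<in>R. \<Sum>J\<in>S.
            \<Prod>k\<in>I. w k (al k) (be k) (a k) (b k) * (if e k (al k) (be k) (a k) (b k) = J k then 1 else 0))"
    unfolding indicator_as_sum_of_deltas[OF assms(2,4,5)]
    by (simp add: sum_distrib_left prod.distrib)
  also have "\<dots> = (\<Sum>J\<in>S. \<Sum>al\<in>R. \<Sum>be\<in>R. \<Sum>a\<in>R. \<Sum>b\<in>R.
            \<Prod>k\<in>I. w k (al k) (be k) (a k) (b k) * (if e k (al k) (be k) (a k) (b k) = J k then 1 else 0))"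
    by (simp only: sum.swap[of _ S R])
  also have "\<dots> = (\<Sum>J\<in>S. \<Prod>k\<in>I. \<Sum>\<alpha>\<in>Z. \<Sum>\<beta>\<in>Z. \<Sum>s\<in>Z. \<Sum>t\<in>Z.
            w k \<alpha> \<beta> s t * (if e k \<alpha> \<beta> s t = J k then 1 else 0))"
    by (simp only: prod_PiE)
  finally show ?thesis .
qed

lemma depolarized_copies_average:
  fixes p :: int and u v :: "nat \<Rightarrow> int" and I :: "nat set"
    and P :: "int \<Rightarrow> int \<Rightarrow> int \<Rightarrow> int \<Rightarrow> real"
  defines "R \<equiv> PiE I (\<lambda>_. zp p)"
  assumes p0: "p > 0" and fin: "finite I" and S: "S \<subseteq> R"
  shows "(\<Sum>al\<in>R. \<Sum>be\<in>R. \<Sum>a'\<in>R. \<Sum>b'\<in>R.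
            (\<Prod>k\<in>I. P (a' k) (b' k) ((u k + al k) mod p) ((v k + be k) mod p)) *
            (if (\<lambda>k\<in>I. (b' k - a' k + ((u k + al k) mod p) * ((v k + be k) mod p)) mod p) \<in> S
             then 1 else 0))
       = ((real_of_int p)^2) ^ card I * (\<Sum>J\<in>S. \<Prod>k\<in>I. mu p P (J k))"
proof -
  have fin_S: "finite S" using finite_subset[OF S] fin by (simp add: R_def finite_PiE zp_def)
  have S_ext: "S \<subseteq> extensional I" using S by (auto simp: R_def PiE_def)
  have "(\<Sum>al\<in>R. \<Sum>be\<in>R. \<Sum>a'\<in>R. \<Sum>b'\<in>R.
            (\<Prod>k\<in>I. P (a' k) (b' k) ((u k + al k) mod p) ((v k + be k) mod p)) *
            (if (\<lambda>k\<in>I. (b' k - a' k + ((u k + al k) mod p) * ((v k + be k) mod p)) mod p) \<in> S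
             then 1 else 0))
      = (\<Sum>J\<in>S. \<Prod>k\<in>I. \<Sum>\<alpha>\<in>zp p. \<Sum>\<beta>\<in>zp p. \<Sum>s\<in>zp p. \<Sum>t\<in>zp p.
            P s t ((u k + \<alpha>) mod p) ((v k + \<beta>) mod p) *
            (if (t - s + ((u k + \<alpha>) mod p) * ((v k + \<beta>) mod p)) mod p = J k then 1 else 0))"
    unfolding R_def
    by (rule independent_copies_factorize[OF fin _ fin_S S_ext]) (simp add: zp_def)
  also have "\<dots> = (\<Sum>J\<in>S. \<Prod>k\<in>I. (real_of_int p)^2 * mu p P (J k))"
    by (intro sum.cong prod.cong refl depolarized_copy_error[OF p0]) (use S in \<open>auto simp: R_def\<close>)
  also have "\<dots> = ((real_of_int p)^2) ^ card I * (\<Sum>J\<in>S. \<Prod>k\<in>I. mu p P (J k))"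
    by (simp add: prod.distrib sum_distrib_left)
  finally show ?thesis .
qed

text \<open>The success probability of basicRAC equals chi(mu, N-1, c): Bob succeeds iff the
  error vector of the N-1 copies lies in S, the corrections gamma do not matter, and
  the normalizations p^(N-1) (from gamma), p^(-3(N-1)) and p^(2(N-1)) cancel.\<close>

lemma success_prob_eq_chi:
  fixes p :: int
  assumes p1: "p > 1" and N1: "1 \<le> N"
    and interp: "[Fcoef p N x 0 + (\<Sum>k\<in>{1..<N}. Fcoef p N x k * ((int y)^k mod p)) = x y] (mod p)"
    and xy: "x y \<in> zp p"
  shows "success_prob p N c P x y = chi p (mu p P) (N - 1) c"
proof -
  define I where "I = {1..<N}"
  define R where "R = PiE I (\<lambda>_. zp p)"
  define S where "S = {J\<in>R. (\<Sum>k\<in>I. J k) mod p = (- c) mod p}"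
  define C :: real where "C = (1 / (real_of_int p) ^ 3) ^ (N - 1)"
  define X where "X al k = (Fcoef p N x k + al k) mod p" for al :: "nat \<Rightarrow> int" and k
  define Y where "Y be k = ((int y)^k mod p + be k) mod p" for be :: "nat \<Rightarrow> int" and k
  define F :: "(nat \<Rightarrow> int) \<Rightarrow> (nat \<Rightarrow> int) \<Rightarrow> (nat \<Rightarrow> int) \<Rightarrow> (nat \<Rightarrow> int) \<Rightarrow> real"
    where "F al be a' b' = (\<Prod>k\<in>I. P (a' k) (b' k) (X al k) (Y be k)) *
             (if (\<lambda>k\<in>I. (b' k - a' k + X al k * Y be k) mod p) \<in> S then 1 else 0)" for al be a' b'
  have p0: "p > 0" using p1 by simp
  have card_R: "real (card R) = (real_of_int p) ^ (N - 1)"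
    using p0 by (simp add: R_def I_def zp_def card_PiE)
  have success_event: "bob_output p N c x y al be ga a' b' = x y
      \<longleftrightarrow> (\<lambda>k\<in>I. (b' k - a' k + X al k * Y be k) mod p) \<in> S" for al be ga a' b'
    unfolding bob_output_correct_iff[OF p1 interp xy] S_def R_def
    using p0 by (simp add: I_def X_def Y_def zp_def)
  have copies: "(\<Sum>al\<in>R. \<Sum>be\<in>R. \<Sum>a'\<in>R. \<Sum>b'\<in>R. F al be a' b')
      = ((real_of_int p)^2) ^ (N - 1) * (\<Sum>J\<in>S. \<Prod>k\<in>I. mu p P (J k))"
    unfolding F_def X_def Y_def R_def
    using depolarized_copies_average[OF p0, of I S] by (simp add: I_def S_def R_def)
  have normalization: "(real_of_int p) ^ (N - 1) * C * ((real_of_int p)^2) ^ (N - 1) = 1"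
  proof -
    have "real_of_int p * (real_of_int p)^2 = (real_of_int p)^3"
      by (simp add: power2_eq_square power3_eq_cube)
    then show ?thesis
      unfolding C_def using p0 by (simp add: power_mult_distrib[symmetric] power_divide)
  qed
  have "success_prob p N c P x y = (\<Sum>al\<in>R. \<Sum>be\<in>R. \<Sum>ga\<in>R. \<Sum>a'\<in>R. \<Sum>b'\<in>R. C * F al be a' b')"
    unfolding success_prob_def Let_def I_def[symmetric] R_def[symmetric]
    by (intro sum.cong refl) (simp add: success_event F_def C_def X_def Y_def)
  also have "\<dots> = (real_of_int p) ^ (N - 1) * C * (\<Sum>al\<in>R. \<Sum>be\<in>R. \<Sum>a'\<in>R. \<Sum>b'\<in>R. F al be a' b')"
    by (simp add: card_R sum_distrib_left[symmetric] mult.assoc)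
  also have "\<dots> = (\<Sum>J\<in>S. \<Prod>k\<in>I. mu p P (J k))"
    by (simp only: copies mult.assoc[symmetric] normalization mult_1)
  also have "\<dots> = chi p (mu p P) (N - 1) c"
  proof -
    have "{1..N - 1} = I" using N1 by (auto simp: I_def)
    then show ?thesis unfolding chi_def S_def R_def by simp
  qed
  finally show ?thesis .
qed

theorem mainTheorem6:
  fixes p :: int and N :: nat and c :: int
    and P :: "int \<Rightarrow> int \<Rightarrow> int \<Rightarrow> int \<Rightarrow> real"
    and x :: "nat \<Rightarrow> int" and y :: nat
  assumes "prime p" and "1 \<le> N" and "int N \<le> p"
    and "is_box p P"
    and "c \<in> zp p"
    and "\<forall>i<N. x i \<in> zp p"
    and "y < N"
  shows "success_prob p N c P x y = chi p (mu p P) (N - 1) c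
       \<and> complex_of_real (chi p (mu p P) (N - 1) c) =
           1 / of_int p * (\<Sum>k\<in>zp p. omega p ^ nat (c * k) *
              (\<Sum>j\<in>zp p. complex_of_real (mu p P j) * omega p ^ nat (j * k)) ^ (N - 1))"
proof
  have p1: "p > 1" using assms(1) prime_gt_1_int by blast
  show "success_prob p N c P x y = chi p (mu p P) (N - 1) c"
    using success_prob_eq_chi[OF p1 assms(2) Fcoef_interpolates[OF assms(1,2,3,7)]] assms(6,7)
    by blast
  show "complex_of_real (chi p (mu p P) (N - 1) c) =
           1 / of_int p * (\<Sum>k\<in>zp p. omega p ^ nat (c * k) *
              (\<Sum>j\<in>zp p. complex_of_real (mu p P j) * omega p ^ nat (j * k)) ^ (N - 1))"
    using p1 assms(5) by (intro chi_fourier) simp_all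
qed

end
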